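(* Let $(G,c)$ be a metric TSP instance with $n\ge 3$ cities, let $T^*$ be a shortest tour and let $L=c(T^* )$. Then every 2-optimal tour $T'$ satisfies $$2\sum_{e\in E(T')} c(e)^2 \le L^2 .$$
   Context: A metric TSP instance with $n$ cities consists of a complete undirected graph $G$ on $n$ vertices together with $c: E(G)\to\mathbb{R}_{\ge 0}$ satisfying the triangle inequality $c(x,y)+c(y,z)\ge c(x,z)$. A tour is a cycle containing all vertices; its length is the sum of its edge lengths. Tours are regarded as oriented cycles. A tour is 2-optimal if for all pairs of edges $(a,b),(x,y)$ of the oriented tour, $c(a,x)+c(b,y)\ge c(a,b)+c(x,y)$. *)

theory Defs
  imports Complex_Main
begin

text \<open>A metric TSP instance on the vertex set V: costs on the edges of the complete
graph, i.e. on pairs of distinct vertices (diagonal values of c are irrelevant).\<close>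
definition metric_tsp :: "'a set \<Rightarrow> ('a \<Rightarrow> 'a \<Rightarrow> real) \<Rightarrow> bool" where
  "metric_tsp V c \<longleftrightarrow> finite V \<and>
     (\<forall>x\<in>V. \<forall>y\<in>V. x \<noteq> y \<longrightarrow> c x y \<ge> 0 \<and> c x y = c y x) \<and>
     (\<forall>x\<in>V. \<forall>y\<in>V. \<forall>z\<in>V. x \<noteq> y \<and> y \<noteq> z \<and> x \<noteq> z \<longrightarrow> c x y + c y z \<ge> c x z)"

text \<open>An oriented tour is a cyclic ordering of all vertices, given by a list listing
every vertex exactly once; its oriented edges are (t!i, t!((i+1) mod n)).\<close>
definition is_tour :: "'a set \<Rightarrow> 'a list \<Rightarrow> bool" where
  "is_tour V t \<longleftrightarrow> distinct t \<and> set t = V"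

definition tour_edge :: "'a list \<Rightarrow> nat \<Rightarrow> 'a \<times> 'a" where
  "tour_edge t i = (t ! i, t ! ((i + 1) mod length t))"

definition tour_length :: "('a \<Rightarrow> 'a \<Rightarrow> real) \<Rightarrow> 'a list \<Rightarrow> real" where
  "tour_length c t = (\<Sum>i<length t. c (fst (tour_edge t i)) (snd (tour_edge t i)))"

definition tour_sq_length :: "('a \<Rightarrow> 'a \<Rightarrow> real) \<Rightarrow> 'a list \<Rightarrow> real" where
  "tour_sq_length c t = (\<Sum>i<length t. (c (fst (tour_edge t i)) (snd (tour_edge t i)))^2)"

definition two_optimal :: "('a \<Rightarrow> 'a \<Rightarrow> real) \<Rightarrow> 'a list \<Rightarrow> bool" where
  "two_optimal c t \<longleftrightarrow>
     (\<forall>i<length t. \<forall>j<length t. i \<noteq> j \<longrightarrow>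
        (let (a, b) = tour_edge t i; (x, y) = tour_edge t j
         in c a x + c b y \<ge> c a b + c x y))"

end

theory Submission
  imports Defs "HOL-Analysis.Analysis"
begin

text \<open>Lay the vertices out on a circle of circumference \<open>L\<close> by their distance along a tour of
  length \<open>L\<close>; by the triangle inequality every cost is at most the circular distance \<open>d\<close>.
  For a point \<open>s\<close> of the circle and an edge \<open>(a, b)\<close> of \<open>T'\<close> of cost \<open>l\<close>, take the arc of
  radius \<open>max 0 (l - d s a)\<close> around \<open>b\<close>. 2-optimality, \<open>l + l' \<le> c a a' + c b b'\<close>, makes these
  arcs pairwise disjoint, so twice the sum of their radii is at most \<open>L\<close>. Integrating over \<open>s\<close>,
  the radius belonging to an edge of cost \<open>l\<close> contributes \<open>l\<^sup>2\<close>, hence \<open>2 \<Sum> l\<^sup>2 \<le> L\<^sup>2\<close>.\<close>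

text \<open>Distance on the circle \<open>\<real> / L\<int>\<close>; the formula is meant for points of \<open>[0, L]\<close>.\<close>
definition circ_dist :: "real \<Rightarrow> real \<Rightarrow> real \<Rightarrow> real" where
  "circ_dist L x y = min \<bar>x - y\<bar> (L - \<bar>x - y\<bar>)"

lemma circ_dist_nonneg: "x \<in> {0..L} \<Longrightarrow> y \<in> {0..L} \<Longrightarrow> 0 \<le> circ_dist L x y"
  unfolding circ_dist_def by auto

lemma circ_dist_commute: "circ_dist L x y = circ_dist L y x"
  unfolding circ_dist_def by (simp add: abs_minus_commute)

lemma circ_dist_le_half: "2 * circ_dist L x y \<le> L"
  unfolding circ_dist_def by (simp add: min_def)

lemma circ_dist_triangle:
  "x \<in> {0..L} \<Longrightarrow> y \<in> {0..L} \<Longrightarrow> z \<in> {0..L} \<Longrightarrow> circ_dist L x z \<le> circ_dist L x y + circ_dist L y z"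
  unfolding circ_dist_def by (auto simp: min_def abs_if)

definition tent :: "real \<Rightarrow> real \<Rightarrow> real" where
  "tent l x = max 0 (l - \<bar>x\<bar>)"

text \<open>\<open>tent_primitive l x\<close> is the integral of \<open>tent l\<close> over \<open>]-\<infinity>, x]\<close>.\<close>
definition tent_primitive :: "real \<Rightarrow> real \<Rightarrow> real" where
  "tent_primitive l x = (let y = max (-l) (min l x) in l\<^sup>2 / 2 + l * y - y * \<bar>y\<bar> / 2)"

lemma tent_primitive_below: "0 \<le> l \<Longrightarrow> x \<le> -l \<Longrightarrow> tent_primitive l x = 0"
  by (cases "x = -l") (auto simp: tent_primitive_def max_def min_def power2_eq_square)

lemma tent_primitive_above: "0 \<le> l \<Longrightarrow> l \<le> x \<Longrightarrow> tent_primitive l x = l\<^sup>2"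
  by (simp add: tent_primitive_def max_def min_def power2_eq_square)

lemma continuous_on_tent_primitive: "continuous_on S (tent_primitive l)"
  unfolding tent_primitive_def Let_def by (intro continuous_intros) auto

lemma tent_primitive_has_derivative:
  assumes "0 \<le> l" "x \<notin> {-l, 0, l}"
  shows "(tent_primitive l has_real_derivative tent l x) (at x)"
proof -
  consider "x < -l" | "-l < x" "x < 0" | "0 < x" "x < l" | "l < x" using assms by force
  then show ?thesis
  proof cases
    case 1
    have "(tent_primitive l has_real_derivative 0) (at x)"
      by (rule has_field_derivative_transform_within_open[of "\<lambda>_. 0" _ _ "{..<-l}"])
        (use 1 assms in \<open>auto simp: tent_primitive_below\<close>)
    with 1 show ?thesis by (simp add: tent_def)
  next
    case 2
    have "((\<lambda>z. (z + l)\<^sup>2 / 2) has_real_derivative x + l) (at x)"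
      by (auto intro!: derivative_eq_intros)
    then have "(tent_primitive l has_real_derivative x + l) (at x)"
      by (rule has_field_derivative_transform_within_open[where S = "{-l<..<0}"])
        (use 2 in \<open>auto simp: tent_primitive_def max_def min_def power2_eq_square algebra_simps\<close>)
    with 2 show ?thesis by (simp add: tent_def add.commute)
  next
    case 3
    have "((\<lambda>z. l\<^sup>2 - (l - z)\<^sup>2 / 2) has_real_derivative l - x) (at x)"
      by (auto intro!: derivative_eq_intros simp: field_simps)
    then have "(tent_primitive l has_real_derivative l - x) (at x)"
      by (rule has_field_derivative_transform_within_open[where S = "{0<..<l}"])
        (use 3 in \<open>auto simp: tent_primitive_def max_def min_def power2_eq_square field_simps\<close>)
    with 3 show ?thesis by (simp add: tent_def)
  next
    case 4
    have "(tent_primitive l has_real_derivative 0) (at x)"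
      by (rule has_field_derivative_transform_within_open[of "\<lambda>_. l\<^sup>2" _ _ "{l<..}"])
        (use 4 assms in \<open>auto simp: tent_primitive_above\<close>)
    with 4 show ?thesis by (simp add: tent_def)
  qed
qed

lemma tent_primitive_shift_has_derivative:
  assumes "0 \<le> l" "s - a \<notin> {-l, 0, l}"
  shows "((\<lambda>s. tent_primitive l (s - a)) has_real_derivative tent l (s - a)) (at s)"
  using DERIV_chain2[OF tent_primitive_has_derivative[OF assms] DERIV_diff[OF DERIV_ident DERIV_const]]
  by simp

lemma circ_tent_eq_sum_tent:
  assumes "0 \<le> l" "2 * l \<le> L" "p \<in> {0..L}" "s \<in> {0..L}"
  shows "max 0 (l - circ_dist L s p) = tent l (s - p) + tent l (s - (p - L)) + tent l (s - (p + L))"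
  using assms unfolding tent_def circ_dist_def by (auto simp: abs_if max_def min_def)

lemma circ_tent_has_integral:
  assumes l: "0 \<le> l" "2 * l \<le> L" and p: "p \<in> {0..L}"
  shows "((\<lambda>s. max 0 (l - circ_dist L s p)) has_integral l\<^sup>2) {0..L}"
proof -
  define F where
    "F s = tent_primitive l (s - p) + tent_primitive l (s - (p - L)) + tent_primitive l (s - (p + L))"
    for s
  define kinks where "kinks = (\<lambda>a. p + a) ` {-L-l, -L, -L+l, -l, 0, l, L-l, L, L+l}"
  have "(F has_vector_derivative tent l (s - p) + tent l (s - (p - L)) + tent l (s - (p + L))) (at s)"
    if "s \<in> {0<..<L} - kinks" for s
    unfolding F_def has_real_derivative_iff_has_vector_derivative[symmetric]
    using that by (intro DERIV_add tent_primitive_shift_has_derivative l) (auto simp: kinks_def)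
  moreover have "continuous_on {0..L} F"
    unfolding F_def
    by (intro continuous_intros continuous_on_compose2[OF continuous_on_tent_primitive[of UNIV]]) auto
  ultimately have "((\<lambda>s. tent l (s - p) + tent l (s - (p - L)) + tent l (s - (p + L)))
      has_integral F L - F 0) {0..L}"
    using l by (intro fundamental_theorem_of_calculus_interior_strong[of kinks]) (auto simp: kinks_def)
  moreover have "F L - F 0 = l\<^sup>2"
    using l p by (simp add: F_def tent_primitive_below tent_primitive_above)
  ultimately have "((\<lambda>s. tent l (s - p) + tent l (s - (p - L)) + tent l (s - (p + L)))
      has_integral l\<^sup>2) {0..L}"
    by simp
  then show ?thesis
    by (rule has_integral_eq[rotated]) (simp add: circ_tent_eq_sum_tent[OF l p])
qed

lemma interval_packing_line:
  fixes y \<rho> :: "'i \<Rightarrow> real"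
  assumes "finite A" "A \<noteq> {}"
    and "\<And>i j. i \<in> A \<Longrightarrow> j \<in> A \<Longrightarrow> i \<noteq> j \<Longrightarrow> \<rho> i + \<rho> j \<le> \<bar>y i - y j\<bar>"
  shows "\<exists>i0\<in>A. \<exists>i1\<in>A. (\<forall>k\<in>A. y i0 \<le> y k \<and> y k \<le> y i1) \<and>
           2 * (\<Sum>k\<in>A. \<rho> k) \<le> \<rho> i0 + \<rho> i1 + (y i1 - y i0)"
  using assms
proof (induction "card A" arbitrary: A rule: less_induct)
  case less
  have "Max (y ` A) \<in> y ` A"
    using less.prems(1,2) by simp
  then obtain m where "m \<in> A" "y m = Max (y ` A)"
    by (metis imageE)
  then have m: "m \<in> A" "\<forall>k\<in>A. y k \<le> y m"
    using less.prems(1) by simp_all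
  show ?case
  proof (cases "A = {m}")
    case True
    then show ?thesis by auto
  next
    case False
    let ?A = "A - {m}"
    have "card ?A < card A" "finite ?A" "?A \<noteq> {}"
      using card_Diff1_less[OF less.prems(1) m(1)] less.prems(1) m(1) False by auto
    then obtain i0 i1 where i: "i0 \<in> ?A" "i1 \<in> ?A" "\<forall>k\<in>?A. y i0 \<le> y k \<and> y k \<le> y i1"
        "2 * (\<Sum>k\<in>?A. \<rho> k) \<le> \<rho> i0 + \<rho> i1 + (y i1 - y i0)"
      using less.hyps[of ?A] less.prems(3) by blast
    have "\<rho> i1 + \<rho> m \<le> y m - y i1"
      using less.prems(3)[of i1 m] i(2) m by auto
    moreover have "(\<Sum>k\<in>A. \<rho> k) = \<rho> m + (\<Sum>k\<in>?A. \<rho> k)"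
      using less.prems(1) m(1) by (simp add: sum.remove)
    ultimately have "2 * (\<Sum>k\<in>A. \<rho> k) \<le> \<rho> i0 + \<rho> m + (y m - y i0)"
      using i(4) by linarith
    moreover have "\<forall>k\<in>A. y i0 \<le> y k \<and> y k \<le> y m"
    proof
      fix k assume "k \<in> A"
      have "y i0 \<le> y i1" "y i1 \<le> y m" using i(2,3) m(2) by auto
      with i(3) m \<open>k \<in> A\<close> show "y i0 \<le> y k \<and> y k \<le> y m" by (cases "k = m") auto
    qed
    ultimately show ?thesis
      using i(1) m(1) by blast
  qed
qed

lemma arc_packing_circle:
  fixes y \<rho> :: "'i \<Rightarrow> real"
  assumes "finite I" "0 \<le> L"
    and \<rho>: "\<And>i. i \<in> I \<Longrightarrow> 0 \<le> \<rho> i" "\<And>i. i \<in> I \<Longrightarrow> 2 * \<rho> i \<le> L"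
    and disjoint: "\<And>i j. i \<in> I \<Longrightarrow> j \<in> I \<Longrightarrow> i \<noteq> j \<Longrightarrow> 0 < \<rho> i \<Longrightarrow> 0 < \<rho> j \<Longrightarrow>
                     \<rho> i + \<rho> j \<le> circ_dist L (y i) (y j)"
  shows "2 * (\<Sum>i\<in>I. \<rho> i) \<le> L"
proof -
  define A where "A = {i\<in>I. 0 < \<rho> i}"
  have "finite A" using \<open>finite I\<close> by (simp add: A_def)
  have sum_A: "(\<Sum>i\<in>I. \<rho> i) = (\<Sum>i\<in>A. \<rho> i)"
    unfolding A_def using \<open>finite I\<close> \<rho>(1) by (intro sum.mono_neutral_right) force+
  have disjoint_A: "\<rho> i + \<rho> j \<le> circ_dist L (y i) (y j)" if "i \<in> A" "j \<in> A" "i \<noteq> j" for i j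
    using disjoint that by (auto simp: A_def)
  show ?thesis
  proof (cases "\<exists>k\<in>A. \<exists>k2\<in>A. k \<noteq> k2")
    case False
    show ?thesis
    proof (cases "A = {}")
      case True
      then show ?thesis using sum_A \<open>0 \<le> L\<close> by simp
    next
      case False
      then obtain i where "i \<in> A" by blast
      with \<open>\<not> (\<exists>k\<in>A. \<exists>k2\<in>A. k \<noteq> k2)\<close> have "A = {i}" by blast
      moreover have "i \<in> I" using \<open>i \<in> A\<close> by (simp add: A_def)
      ultimately show ?thesis using sum_A \<rho>(2) by simp
    qed
  next
    case True
    then obtain k k2 where k: "k \<in> A" "k2 \<in> A" "k \<noteq> k2" by blast
    have "\<rho> i + \<rho> j \<le> \<bar>y i - y j\<bar>" if "i \<in> A" "j \<in> A" "i \<noteq> j" for i j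
      using disjoint_A[OF that] by (simp add: circ_dist_def)
    then obtain i0 i1 where i: "i0 \<in> A" "i1 \<in> A" "\<forall>k\<in>A. y i0 \<le> y k \<and> y k \<le> y i1"
        "2 * (\<Sum>k\<in>A. \<rho> k) \<le> \<rho> i0 + \<rho> i1 + (y i1 - y i0)"
      using interval_packing_line[OF \<open>finite A\<close>] k(1) by blast
    have "i0 \<noteq> i1"
    proof
      assume "i0 = i1"
      then have "y k = y i0" "y k2 = y i0" using i(3) k(1,2) by (auto intro: order_antisym)
      then have "\<rho> k + \<rho> k2 \<le> 0"
        using disjoint_A[OF k] by (simp add: circ_dist_def)
      then show False using k(1,2) by (auto simp: A_def)
    qed
    then have "\<rho> i0 + \<rho> i1 \<le> L - (y i1 - y i0)"
      using disjoint_A[OF i(1,2)] i(1,3) by (auto simp: circ_dist_def)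
    then show ?thesis
      using sum_A i(4) by linarith
  qed
qed

lemma circle_chords_sq_sum_le:
  fixes p q l :: "'i \<Rightarrow> real"
  assumes "finite I" "0 \<le> L"
    and pq: "\<And>i. i \<in> I \<Longrightarrow> p i \<in> {0..L} \<and> q i \<in> {0..L}"
    and l: "\<And>i. i \<in> I \<Longrightarrow> 0 \<le> l i \<and> 2 * l i \<le> L"
    and crossing: "\<And>i j. i \<in> I \<Longrightarrow> j \<in> I \<Longrightarrow> i \<noteq> j \<Longrightarrow>
                     l i + l j \<le> circ_dist L (p i) (p j) + circ_dist L (q i) (q j)"
  shows "2 * (\<Sum>i\<in>I. (l i)\<^sup>2) \<le> L\<^sup>2"
proof -
  define \<rho> where "\<rho> s i = max 0 (l i - circ_dist L s (p i))" for s i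
  have pointwise: "2 * (\<Sum>i\<in>I. \<rho> s i) \<le> L" if s: "s \<in> {0..L}" for s
  proof (rule arc_packing_circle[where y = q, OF \<open>finite I\<close> \<open>0 \<le> L\<close>])
    show "2 * \<rho> s i \<le> L" if "i \<in> I" for i
      using l[OF that] circ_dist_nonneg[OF s, of "p i"] pq[OF that] \<open>0 \<le> L\<close> by (simp add: \<rho>_def max_def)
  next
    fix i j assume ij: "i \<in> I" "j \<in> I" "i \<noteq> j" and "0 < \<rho> s i" "0 < \<rho> s j"
    then have "\<rho> s i + \<rho> s j = l i + l j - (circ_dist L s (p i) + circ_dist L s (p j))"
      by (simp add: \<rho>_def)
    also have "\<dots> \<le> l i + l j - circ_dist L (p i) (p j)"
      using circ_dist_triangle[of "p i" L s "p j"] circ_dist_commute[of L s "p i"] pq ij s by simp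
    also have "\<dots> \<le> circ_dist L (q i) (q j)"
      using crossing[OF ij] by simp
    finally show "\<rho> s i + \<rho> s j \<le> circ_dist L (q i) (q j)" .
  qed (simp add: \<rho>_def)
  have "((\<lambda>s. 2 * (\<Sum>i\<in>I. \<rho> s i)) has_integral 2 * (\<Sum>i\<in>I. (l i)\<^sup>2)) {0..L}"
    unfolding \<rho>_def using l pq
    by (intro has_integral_mult_right has_integral_sum \<open>finite I\<close> circ_tent_has_integral) auto
  moreover have "((\<lambda>s. L) has_integral L\<^sup>2) {0..L}"
    using has_integral_const_real[of L 0 L] \<open>0 \<le> L\<close> by (simp add: power2_eq_square)
  ultimately show ?thesis
    by (rule has_integral_le) (use pointwise in auto)
qed

lemma metric_tsp_nonneg: "metric_tsp V c \<Longrightarrow> x \<in> V \<Longrightarrow> y \<in> V \<Longrightarrow> x \<noteq> y \<Longrightarrow> 0 \<le> c x y"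
  unfolding metric_tsp_def by blast

lemma metric_tsp_sym: "metric_tsp V c \<Longrightarrow> x \<in> V \<Longrightarrow> y \<in> V \<Longrightarrow> x \<noteq> y \<Longrightarrow> c x y = c y x"
  unfolding metric_tsp_def by blast

lemma metric_tsp_triangle:
  "metric_tsp V c \<Longrightarrow> x \<in> V \<Longrightarrow> y \<in> V \<Longrightarrow> z \<in> V \<Longrightarrow> x \<noteq> y \<Longrightarrow> y \<noteq> z \<Longrightarrow> x \<noteq> z \<Longrightarrow>
    c x z \<le> c x y + c y z"
  unfolding metric_tsp_def by blast

lemma tour_edge_in_set:
  assumes "i < length t"
  shows "fst (tour_edge t i) \<in> set t \<and> snd (tour_edge t i) \<in> set t"
proof -
  have "Suc i mod length t < length t"
    using assms by (intro mod_less_divisor) linarith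
  with assms show ?thesis by (simp add: tour_edge_def)
qed

lemma tour_edge_fst_neq_snd:
  assumes "distinct t" "2 \<le> length t" "i < length t"
  shows "fst (tour_edge t i) \<noteq> snd (tour_edge t i)"
proof -
  have "Suc i mod length t < length t" "Suc i mod length t \<noteq> i" using assms by (auto simp: mod_Suc)
  with assms show ?thesis by (simp add: tour_edge_def nth_eq_iff_index_eq)
qed

lemma tour_edge_inj:
  assumes "distinct t" "i < length t" "j < length t" "i \<noteq> j"
  shows "fst (tour_edge t i) \<noteq> fst (tour_edge t j)" "snd (tour_edge t i) \<noteq> snd (tour_edge t j)"
proof -
  have "Suc i mod length t < length t" "Suc j mod length t < length t"
    "Suc i mod length t \<noteq> Suc j mod length t"
    using assms by (auto simp: mod_Suc)
  with assms show "fst (tour_edge t i) \<noteq> fst (tour_edge t j)" "snd (tour_edge t i) \<noteq> snd (tour_edge t j)"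
    by (simp_all add: tour_edge_def nth_eq_iff_index_eq)
qed

definition tour_prefix_length :: "('a \<Rightarrow> 'a \<Rightarrow> real) \<Rightarrow> 'a list \<Rightarrow> nat \<Rightarrow> real" where
  "tour_prefix_length c t k = (\<Sum>i<k. c (fst (tour_edge t i)) (snd (tour_edge t i)))"

lemma tour_length_eq_prefix_length: "tour_length c t = tour_prefix_length c t (length t)"
  by (simp add: tour_length_def tour_prefix_length_def)

lemma tour_prefix_length_diff:
  "k \<le> m \<Longrightarrow> tour_prefix_length c t m - tour_prefix_length c t k =
     (\<Sum>i\<in>{k..<m}. c (fst (tour_edge t i)) (snd (tour_edge t i)))"
  unfolding tour_prefix_length_def lessThan_atLeast0
  by (simp add: sum.atLeastLessThan_concat[of 0 k m, symmetric])

lemma tour_prefix_length_mono: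
  assumes "metric_tsp V c" "is_tour V t" "2 \<le> length t" "k \<le> m" "m \<le> length t"
  shows "tour_prefix_length c t k \<le> tour_prefix_length c t m"
proof -
  have "0 \<le> c (fst (tour_edge t i)) (snd (tour_edge t i))" if "i < length t" for i
    using assms(1-3) that
    by (intro metric_tsp_nonneg[of V]) (auto simp: is_tour_def tour_edge_in_set tour_edge_fst_neq_snd)
  then have "0 \<le> (\<Sum>i\<in>{k..<m}. c (fst (tour_edge t i)) (snd (tour_edge t i)))"
    using assms(5) by (intro sum_nonneg) auto
  then show ?thesis
    using tour_prefix_length_diff[OF assms(4), of c t] by simp
qed

text \<open>The side condition excludes the closed tour \<open>k = 0\<close>, \<open>m = length t\<close>, whose left-hand
  side would be the meaningless diagonal value \<open>c (t ! 0) (t ! 0)\<close>.\<close>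
lemma tour_arc_le:
  assumes M: "metric_tsp V c" and t: "is_tour V t" "2 \<le> length t"
    and km: "k < m" "m \<le> length t" "0 < k \<or> m < length t"
  shows "c (t ! k) (t ! (m mod length t)) \<le> tour_prefix_length c t m - tour_prefix_length c t k"
  using km
proof (induction m)
  case (Suc m)
  let ?n = "length t"
  show ?case
  proof (cases "k = m")
    case True
    then show ?thesis by (simp add: tour_prefix_length_def tour_edge_def)
  next
    case False
    then have km: "k < m" "m < ?n" "0 < ?n" using Suc.prems by auto
    have vertices: "t ! k \<in> V" "t ! m \<in> V" "t ! (Suc m mod ?n) \<in> V"
      using t(1) km by (auto simp: is_tour_def mod_Suc)
    have distinct: "t ! k \<noteq> t ! m" "t ! m \<noteq> t ! (Suc m mod ?n)" "t ! k \<noteq> t ! (Suc m mod ?n)"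
      using t Suc.prems km by (auto simp: is_tour_def nth_eq_iff_index_eq mod_Suc)
    have "c (t ! k) (t ! (Suc m mod ?n)) \<le> c (t ! k) (t ! m) + c (t ! m) (t ! (Suc m mod ?n))"
      by (rule metric_tsp_triangle[OF M vertices distinct])
    also have "\<dots> \<le> tour_prefix_length c t (Suc m) - tour_prefix_length c t k"
      using Suc.IH km by (simp add: tour_prefix_length_def tour_edge_def)
    finally show ?thesis .
  qed
qed simp

lemma tour_nth_cost_le_circ_dist:
  assumes M: "metric_tsp V c" and t: "is_tour V t" "2 \<le> length t" and km: "k < m" "m < length t"
  shows "c (t ! k) (t ! m) \<le> circ_dist (tour_length c t) (tour_prefix_length c t k) (tour_prefix_length c t m)"
proof -
  let ?n = "length t" and ?P = "tour_prefix_length c t" and ?L = "tour_length c t"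
  have "0 < ?n" using km by linarith
  have vertices: "t ! 0 \<in> V" "t ! k \<in> V" "t ! m \<in> V"
    using t(1) km \<open>0 < ?n\<close> by (auto simp: is_tour_def)
  have "t ! k \<noteq> t ! m"
    using t(1) km by (auto simp: is_tour_def nth_eq_iff_index_eq)
  have forward: "c (t ! k) (t ! m) \<le> ?P m - ?P k"
    using tour_arc_le[OF M t km(1)] km by simp
  have "c (t ! m) (t ! 0) \<le> ?L - ?P m"
    using tour_arc_le[OF M t km(2)] km by (simp add: tour_length_eq_prefix_length)
  moreover have "c (t ! m) (t ! k) \<le> c (t ! m) (t ! 0) + ?P k"
  proof (cases "k = 0")
    case True
    then show ?thesis by (simp add: tour_prefix_length_def)
  next
    case False
    have "t ! 0 \<noteq> t ! k" "t ! 0 \<noteq> t ! m"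
      using t(1) km False \<open>0 < ?n\<close> by (auto simp: is_tour_def nth_eq_iff_index_eq)
    then have "c (t ! m) (t ! k) \<le> c (t ! m) (t ! 0) + c (t ! 0) (t ! k)"
      using metric_tsp_triangle[OF M vertices(3,1,2)] \<open>t ! k \<noteq> t ! m\<close> by simp
    moreover have "c (t ! 0) (t ! k) \<le> ?P k"
      using tour_arc_le[OF M t, of 0 k] km False by (simp add: tour_prefix_length_def)
    ultimately show ?thesis by simp
  qed
  ultimately have backward: "c (t ! k) (t ! m) \<le> ?L - (?P m - ?P k)"
    using metric_tsp_sym[OF M vertices(2,3) \<open>t ! k \<noteq> t ! m\<close>] by simp
  have "\<bar>?P k - ?P m\<bar> = ?P m - ?P k"
    using tour_prefix_length_mono[OF M t, of k m] km by simp
  with forward backward show ?thesis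
    by (simp add: circ_dist_def)
qed

lemma tour_circle_embedding:
  assumes M: "metric_tsp V c" and t: "is_tour V t" "2 \<le> length t"
  obtains P where "\<And>v. v \<in> V \<Longrightarrow> P v \<in> {0..tour_length c t}"
    and "\<And>v w. v \<in> V \<Longrightarrow> w \<in> V \<Longrightarrow> v \<noteq> w \<Longrightarrow> c v w \<le> circ_dist (tour_length c t) (P v) (P w)"
proof -
  let ?n = "length t" and ?P = "tour_prefix_length c t" and ?L = "tour_length c t"
  have "\<forall>v\<in>V. \<exists>k. k < ?n \<and> t ! k = v"
    using t(1) by (auto simp: is_tour_def in_set_conv_nth)
  then obtain idx where idx: "\<And>v. v \<in> V \<Longrightarrow> idx v < ?n \<and> t ! idx v = v"
    by metis
  have "?P (idx v) \<in> {0..?L}" if "v \<in> V" for v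
    using tour_prefix_length_mono[OF M t, of 0 "idx v"] tour_prefix_length_mono[OF M t, of "idx v" ?n]
      idx[OF that] by (simp add: tour_length_eq_prefix_length tour_prefix_length_def)
  moreover have "c v w \<le> circ_dist ?L (?P (idx v)) (?P (idx w))"
    if vw: "v \<in> V" "w \<in> V" "v \<noteq> w" for v w
  proof -
    have "idx v \<noteq> idx w" using idx vw by metis
    then consider "idx v < idx w" | "idx w < idx v" by linarith
    then show ?thesis
    proof cases
      case 1
      then show ?thesis using tour_nth_cost_le_circ_dist[OF M t 1] idx vw by simp
    next
      case 2
      then show ?thesis using tour_nth_cost_le_circ_dist[OF M t 2] idx vw
        by (simp add: metric_tsp_sym[OF M vw] circ_dist_commute)
    qed
  qed
  ultimately show thesis
    by (rule that)
qed

lemma two_optimal_sq_length_le_circle: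
  assumes M: "metric_tsp V c" and T: "is_tour V T" "2 \<le> length T" "two_optimal c T"
    and P: "\<And>v. v \<in> V \<Longrightarrow> P v \<in> {0..L}"
    and dominated: "\<And>v w. v \<in> V \<Longrightarrow> w \<in> V \<Longrightarrow> v \<noteq> w \<Longrightarrow> c v w \<le> circ_dist L (P v) (P w)"
  shows "2 * tour_sq_length c T \<le> L\<^sup>2"
proof -
  define a where "a i = fst (tour_edge T i)" for i
  define b where "b i = snd (tour_edge T i)" for i
  have ab: "a i \<in> V" "b i \<in> V" "a i \<noteq> b i" if "i < length T" for i
    using T that tour_edge_in_set tour_edge_fst_neq_snd by (auto simp: a_def b_def is_tour_def)
  have "0 \<le> L"
    using P[OF ab(1)] T(2) by fastforce
  have "2 * (\<Sum>i\<in>{..<length T}. (c (a i) (b i))\<^sup>2) \<le> L\<^sup>2"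
  proof (rule circle_chords_sq_sum_le[where p = "P \<circ> a" and q = "P \<circ> b"])
    fix i assume "i \<in> {..<length T}"
    then show "(P \<circ> a) i \<in> {0..L} \<and> (P \<circ> b) i \<in> {0..L}"
      and "0 \<le> c (a i) (b i) \<and> 2 * c (a i) (b i) \<le> L"
      using ab P metric_tsp_nonneg[OF M] dominated circ_dist_le_half[of L "P (a i)" "P (b i)"]
      by fastforce+
  next
    fix i j assume ij: "i \<in> {..<length T}" "j \<in> {..<length T}" "i \<noteq> j"
    have "c (a i) (b i) + c (a j) (b j) \<le> c (a i) (a j) + c (b i) (b j)"
      using T(3) ij unfolding two_optimal_def a_def b_def by (auto simp: case_prod_beta)
    also have "\<dots> \<le> circ_dist L (P (a i)) (P (a j)) + circ_dist L (P (b i)) (P (b j))"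
      using ij ab T(1) tour_edge_inj[of T i j] dominated
      by (intro add_mono) (auto simp: a_def b_def is_tour_def)
    finally show "c (a i) (b i) + c (a j) (b j) \<le>
        circ_dist L ((P \<circ> a) i) ((P \<circ> a) j) + circ_dist L ((P \<circ> b) i) ((P \<circ> b) j)"
      by simp
  qed (use \<open>0 \<le> L\<close> in simp_all)
  then show ?thesis
    by (simp add: tour_sq_length_def a_def b_def)
qed

text \<open>The bound holds with \<open>L\<close> the length of any tour.\<close>
theorem mainTheorem4:
  fixes V :: "'a set" and c :: "'a \<Rightarrow> 'a \<Rightarrow> real" and Tstar T' :: "'a list"
  assumes "metric_tsp V c"
    and "card V \<ge> 3"
    and "is_tour V Tstar"
    and "\<forall>T. is_tour V T \<longrightarrow> tour_length c Tstar \<le> tour_length c T"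
    and "is_tour V T'"
    and "two_optimal c T'"
  shows "2 * tour_sq_length c T' \<le> (tour_length c Tstar)^2"
proof -
  have "2 \<le> length Tstar" "2 \<le> length T'"
    using assms(2,3,5) by (auto simp: is_tour_def distinct_card[symmetric])
  obtain P where "\<And>v. v \<in> V \<Longrightarrow> P v \<in> {0..tour_length c Tstar}"
    and "\<And>v w. v \<in> V \<Longrightarrow> w \<in> V \<Longrightarrow> v \<noteq> w \<Longrightarrow> c v w \<le> circ_dist (tour_length c Tstar) (P v) (P w)"
    using tour_circle_embedding[OF assms(1,3) \<open>2 \<le> length Tstar\<close>] by blast
  then show ?thesis
    by (rule two_optimal_sq_length_le_circle[OF assms(1,5) \<open>2 \<le> length T'\<close> assms(6)])
qed

end
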